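(* Let $\mathcal{Q}$ be a poset and let $\mathfrak X$ be an algebra on $\mathcal{Q}$ such that the category $\mathrm{Vect}^{\mathcal{Q}}_{\mathfrak X}$ of finitely $\mathfrak X$-encoded persistence modules is a full abelian subcategory of $\mathrm{Vect}^{\mathcal{Q}}$. Let $\mathfrak X_{\mathrm{Up}}$ be the algebra on $\mathcal{Q}$ generated by the upsets of $\mathcal{Q}$ that belong to $\mathfrak X$. Then the map \[ \nu \longmapsto \Big( M \mapsto \int_{\mathcal{Q}} \dim(M)\, d\nu \Big) \] from the set of contents on $\mathfrak X_{\mathrm{Up}}$ to the class of additive amplitudes on $\mathrm{Vect}^{\mathcal{Q}}_{\mathfrak X}$ is a bijection. In other words, every additive amplitude on $\mathrm{Vect}^{\mathcal{Q}}_{\mathfrak X}$ is given by integrating the Hilbert function $q\mapsto \dim M(q)$ against a unique content on $\mathfrak X_{\mathrm{Up}}$.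
   Context: $\mathrm{Vect}$ is the category of finite-dimensional vector spaces over a fixed field $\mathbb F$; a persistence module over a poset $\mathcal{Q}$ is a functor $\mathcal{Q}\to\mathrm{Vect}$ ($\mathcal{Q}$ viewed as a category). An algebra on a set is a family of subsets containing $\emptyset$ and closed under complements and finite unions. An upset of $\mathcal{Q}$ is a subset $U$ with $u\in U, u\le q\Rightarrow q\in U$; a downset is defined dually; an interval is an intersection of an upset and a downset. A finite encoding of $M\in\mathrm{Vect}^{\mathcal{Q}}$ consists of an order-preserving map $e\colon\mathcal{Q}\to\mathcal{P}$ to a finite poset $\mathcal{P}$, a module $M'\in\mathrm{Vect}^{\mathcal{P}}$ and an isomorphism $M\cong e^*M'=M'\circ e$; it is an $\mathfrak X$-encoding if every fiber $e^{-1}(p)$ belongs to $\mathfrak X$. $M$ is finitely $\mathfrak X$-encoded if it admits an $\mathfrak X$-encoding; $\mathrm{Vect}^{\mathcal{Q}}_{\mathfrak X}$ is the full subcategory of such modules. For an abelian category $\mathcal{A}$, an amplitude is a function $\alpha\colon\operatorname{ob}\mathcal{A}\to[0,\infty]$ with $\alpha(0)=0$ such that for every short exact sequence $0\to A\to B\to C\to 0$ one has $\alpha(A)\le\alpha(B)$, $\alpha(C)\le\alpha(B)$ and $\alpha(B)\le\alpha(A)+\alpha(C)$; it is additive if always $\alpha(B)=\alpha(A)+\alpha(C)$. A content on an algebra $\mathfrak A$ is a function $\nu\colon\mathfrak A\to[0,\infty]$ with $\nu(\emptyset)=0$ and $\nu(X\cup Y)=\nu(X)+\nu(Y)$ for disjoint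 $X,Y\in\mathfrak A$. For $M$ in $\mathrm{Vect}^{\mathcal{Q}}_{\mathfrak X}$ the Hilbert function $\dim(M)\colon q\mapsto\dim M(q)$ takes finitely many values with level sets in $\mathfrak X_{\mathrm{Up}}$, and the integral of such a finitely-valued function $f=\sum_i\lambda_i 1_{X_i}$ is defined as $\int f\,d\nu=\sum_i\lambda_i\nu(X_i)$. *)

theory Defs
  imports "HOL-Analysis.Sigma_Algebra" "Jordan_Normal_Form.Matrix_Kernel"
begin

text \<open>Finite-dimensional vector spaces over the field 'f are modelled by the
  skeleton of Vect: objects are the spaces 'f^n (n :: nat), morphisms are matrices.
  A persistence module over the poset 'q (a type with a partial order) is a pair
  (d, m): d q = dim M(q), and m q r is the matrix of M(q \<le> r) : M(q) \<rightarrow> M(r).\<close>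

type_synonym ('q, 'f) pmod = "('q \<Rightarrow> nat) \<times> ('q \<Rightarrow> 'q \<Rightarrow> 'f mat)"

definition is_functor :: "'p set \<Rightarrow> ('p \<Rightarrow> 'p \<Rightarrow> bool) \<Rightarrow> ('p \<Rightarrow> nat)
    \<Rightarrow> ('p \<Rightarrow> 'p \<Rightarrow> 'f::field mat) \<Rightarrow> bool" where
  "is_functor D lp d m \<longleftrightarrow>
     (\<forall>p\<in>D. \<forall>q\<in>D. lp p q \<longrightarrow> m p q \<in> carrier_mat (d q) (d p)) \<and>
     (\<forall>p\<in>D. m p p = one_mat (d p)) \<and>
     (\<forall>p\<in>D. \<forall>q\<in>D. \<forall>r\<in>D. lp p q \<and> lp q r \<longrightarrow> m p r = m q r * m p q)"

text \<open>Persistence modules over 'q (irrelevant entries for incomparable pairs are normalised to 0).\<close>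
definition pmod :: "('q::order, 'f::field) pmod \<Rightarrow> bool" where
  "pmod M \<longleftrightarrow> is_functor UNIV (\<le>) (fst M) (snd M) \<and>
     (\<forall>q r. \<not> q \<le> r \<longrightarrow> snd M q r = zero_mat (fst M r) (fst M q))"

definition is_hom :: "('q::order, 'f::field) pmod \<Rightarrow> ('q, 'f) pmod \<Rightarrow> ('q \<Rightarrow> 'f mat) \<Rightarrow> bool" where
  "is_hom M N f \<longleftrightarrow> pmod M \<and> pmod N \<and>
     (\<forall>q. f q \<in> carrier_mat (fst N q) (fst M q)) \<and>
     (\<forall>q r. q \<le> r \<longrightarrow> snd N q r * f q = f r * snd M q r)"

definition mat_image :: "'f::field mat \<Rightarrow> 'f vec set" where
  "mat_image A = (\<lambda>v. A *\<^sub>v v) ` carrier_vec (dim_col A)"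

definition is_iso :: "('q::order, 'f::field) pmod \<Rightarrow> ('q, 'f) pmod \<Rightarrow> bool" where
  "is_iso M N \<longleftrightarrow> (\<exists>f g. is_hom M N f \<and> is_hom N M g \<and>
     (\<forall>q. g q * f q = one_mat (fst M q) \<and> f q * g q = one_mat (fst N q)))"

definition short_exact :: "('q::order, 'f::field) pmod \<Rightarrow> ('q, 'f) pmod \<Rightarrow> ('q, 'f) pmod
    \<Rightarrow> ('q \<Rightarrow> 'f mat) \<Rightarrow> ('q \<Rightarrow> 'f mat) \<Rightarrow> bool" where
  "short_exact A B C f g \<longleftrightarrow> is_hom A B f \<and> is_hom B C g \<and>
     (\<forall>q. mat_kernel (f q) = {zero_vec (fst A q)} \<and>
          mat_image (f q) = mat_kernel (g q) \<and>
          mat_image (g q) = carrier_vec (fst C q))"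

definition zero_pmod :: "('q::order, 'f::field) pmod" where
  "zero_pmod = ((\<lambda>_. 0), (\<lambda>_ _. zero_mat 0 0))"

definition pullback :: "('q::order \<Rightarrow> nat) \<Rightarrow> (nat \<Rightarrow> nat) \<Rightarrow> (nat \<Rightarrow> nat \<Rightarrow> 'f::field mat)
    \<Rightarrow> ('q, 'f) pmod" where
  "pullback e d' m' = ((\<lambda>q. d' (e q)),
     (\<lambda>q r. if q \<le> r then m' (e q) (e r) else zero_mat (d' (e r)) (d' (e q))))"

text \<open>Finite \<X>-encodings. Every finite poset is isomorphic to a partial order lp on {..<n}.\<close>
definition fin_encoded :: "'q::order set set \<Rightarrow> ('q, 'f::field) pmod \<Rightarrow> bool" where
  "fin_encoded X M \<longleftrightarrow> pmod M \<and>
     (\<exists>(n::nat) lp e d' m'.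
        (\<forall>i<n. lp i i) \<and> (\<forall>i<n. \<forall>j<n. lp i j \<and> lp j i \<longrightarrow> i = j) \<and>
        (\<forall>i<n. \<forall>j<n. \<forall>k<n. lp i j \<and> lp j k \<longrightarrow> lp i k) \<and>
        (\<forall>q. e q < n) \<and> (\<forall>q r. q \<le> r \<longrightarrow> lp (e q) (e r)) \<and>
        is_functor {..<n} lp d' m' \<and>
        (\<forall>i<n. e -` {i} \<in> X) \<and>
        is_iso M (pullback e d' m'))"

definition VectX :: "'q::order set set \<Rightarrow> ('q, 'f::field) pmod set" where
  "VectX X = {M. fin_encoded X M}"

text \<open>Full abelian subcategory of Vect^Q: contains 0 and is closed under
  binary biproducts, kernels and cokernels (computed in Vect^Q).\<close>
definition abelian_subcat :: "('q::order, 'f::field) pmod set \<Rightarrow> bool" where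
  "abelian_subcat \<C> \<longleftrightarrow> \<C> \<subseteq> {M. pmod M} \<and> zero_pmod \<in> \<C> \<and>
     (\<forall>M\<in>\<C>. \<forall>N\<in>\<C>. \<exists>S\<in>\<C>. \<exists>i1 i2 p1 p2. is_hom M S i1 \<and> is_hom N S i2 \<and>
         is_hom S M p1 \<and> is_hom S N p2 \<and>
         (\<forall>q. p1 q * i1 q = one_mat (fst M q) \<and> p2 q * i2 q = one_mat (fst N q) \<and>
              i1 q * p1 q + i2 q * p2 q = one_mat (fst S q))) \<and>
     (\<forall>M\<in>\<C>. \<forall>N\<in>\<C>. \<forall>f. is_hom M N f \<longrightarrow>
         (\<exists>K\<in>\<C>. \<exists>k. is_hom K M k \<and>
            (\<forall>q. mat_kernel (k q) = {zero_vec (fst K q)} \<and> mat_image (k q) = mat_kernel (f q))) \<and>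
         (\<exists>C\<in>\<C>. \<exists>c. is_hom N C c \<and>
            (\<forall>q. mat_image (c q) = carrier_vec (fst C q) \<and> mat_kernel (c q) = mat_image (f q))))"

definition amplitude :: "('q::order, 'f::field) pmod set \<Rightarrow> (('q, 'f) pmod \<Rightarrow> ennreal) \<Rightarrow> bool" where
  "amplitude \<C> \<alpha> \<longleftrightarrow> (\<forall>Z\<in>\<C>. fst Z = (\<lambda>_. 0) \<longrightarrow> \<alpha> Z = 0) \<and>
     (\<forall>A\<in>\<C>. \<forall>B\<in>\<C>. \<forall>C\<in>\<C>. \<forall>f g. short_exact A B C f g \<longrightarrow>
        \<alpha> A \<le> \<alpha> B \<and> \<alpha> C \<le> \<alpha> B \<and> \<alpha> B \<le> \<alpha> A + \<alpha> C)"

definition additive_amplitude :: "('q::order, 'f::field) pmod set \<Rightarrow> (('q, 'f) pmod \<Rightarrow> ennreal) \<Rightarrow> bool" where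
  "additive_amplitude \<C> \<alpha> \<longleftrightarrow> amplitude \<C> \<alpha> \<and>
     (\<forall>A\<in>\<C>. \<forall>B\<in>\<C>. \<forall>C\<in>\<C>. \<forall>f g. short_exact A B C f g \<longrightarrow> \<alpha> B = \<alpha> A + \<alpha> C)"

definition upset :: "'q::order set \<Rightarrow> bool" where
  "upset U \<longleftrightarrow> (\<forall>u q. u \<in> U \<and> u \<le> q \<longrightarrow> q \<in> U)"

definition XUp :: "'q::order set set \<Rightarrow> 'q set set" where
  "XUp X = \<Inter> {A. Sigma_Algebra.algebra UNIV A \<and> {U \<in> X. upset U} \<subseteq> A}"

definition content :: "'q set set \<Rightarrow> ('q set \<Rightarrow> ennreal) \<Rightarrow> bool" where
  "content A \<nu> \<longleftrightarrow> \<nu> {} = 0 \<and>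
     (\<forall>X\<in>A. \<forall>Y\<in>A. X \<inter> Y = {} \<longrightarrow> \<nu> (X \<union> Y) = \<nu> X + \<nu> Y)"

text \<open>Integral of the Hilbert function dim(M) against a content, via its level sets.\<close>
definition hilbert_integral :: "('q set \<Rightarrow> ennreal) \<Rightarrow> ('q, 'f) pmod \<Rightarrow> ennreal" where
  "hilbert_integral \<nu> M = (\<Sum>k \<in> range (fst M). of_nat k * \<nu> {q. fst M q = k})"

end

theory Submission
  imports Defs "HOL-Analysis.Measure_Space"
begin

text \<open>
  A finitely encoded module M is, up to isomorphism, pulled back along an encoding e from a module
  with dimension vector d on a finite poset. If p is maximal among the points with d p \<noteq> 0, the
  part of M over the fibre of p is a submodule, and the quotient is M with that fibre deleted.
  Peeling off fibres one by one shows that an additive amplitude \<alpha> satisfies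
  \<alpha> M = \<Sum>i. \<alpha> (S i (d i)), where S i k is the sum of k copies of the interval module on the
  fibre over i. On a common refinement of two encodings this shows that \<alpha> M depends only on the
  Hilbert function of M.

  Every set S in XUp is a union of fibres of some encoding, hence the support of a module with a
  0/1-valued Hilbert function, and \<nu> S := \<alpha> (such a module) is a content because biproducts
  add Hilbert functions. Then \<alpha> and the integral against \<nu> are additive amplitudes agreeing on
  these indicator modules, hence everywhere. Conversely, integration against a content is additive
  because Hilbert functions add along short exact sequences (rank-nullity), and a content is
  recovered by integrating indicator modules, which gives injectivity.
\<close>

section \<open>Kernels, images and exactness of matrices\<close>

lemma empty_mat_eqI:
  assumes "A \<in> carrier_mat r c" "B \<in> carrier_mat r c" "r = 0 \<or> c = 0"
  shows "A = B"
  using assms by (intro eq_matI) auto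

lemma mult_mat_vec_linear_map:
  fixes A :: "'a::field mat"
  assumes "A \<in> carrier_mat m n"
  shows "linear_map class_ring (module_vec TYPE('a) n) (module_vec TYPE('a) m) (\<lambda>v. A *\<^sub>v v)"
proof (intro linear_map.intro mod_hom.intro mod_hom_axioms.intro)
  show "(\<lambda>v. A *\<^sub>v v) \<in> module_hom class_ring (module_vec TYPE('a) n) (module_vec TYPE('a) m)"
    using assms
    by (auto simp: module_hom_def module_vec_simps class_ring_simps mult_add_distrib_mat_vec
        mult_mat_vec)
qed (use vec_vs vec_module in auto)

lemma mat_rank_nullity:
  fixes A :: "'a::field mat"
  assumes A: "A \<in> carrier_mat m n"
  shows "vectorspace.dim class_ring ((module_vec TYPE('a) m)\<lparr>carrier := mat_image A\<rparr>)
       + vectorspace.dim class_ring ((module_vec TYPE('a) n)\<lparr>carrier := mat_kernel A\<rparr>) = n"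
proof -
  interpret L: linear_map class_ring "module_vec TYPE('a) n" "module_vec TYPE('a) m" "\<lambda>v. A *\<^sub>v v"
    by (rule mult_mat_vec_linear_map[OF A])
  interpret Vn: vec_space "TYPE('a)" n .
  have "L.imT = mat_image A"
    using A unfolding L.im_def mat_image_def by (simp add: module_vec_simps)
  moreover have "L.kerT = mat_kernel A"
    using A unfolding L.ker_def mat_kernel_def by (auto simp: module_vec_simps)
  ultimately show ?thesis
    using L.rank_nullity Vn.fin_dim Vn.dim_is_n by simp
qed

lemma dim_zero_subspace:
  "vectorspace.dim class_ring ((module_vec TYPE('a::field) n)\<lparr>carrier := {0\<^sub>v n}\<rparr>) = 0"
proof -
  interpret L: linear_map class_ring "module_vec TYPE('a) n" "module_vec TYPE('a) n"
      "\<lambda>v. 1\<^sub>m n *\<^sub>v v"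
    by (rule mult_mat_vec_linear_map) simp
  have "L.kerT = {0\<^sub>v n}"
    unfolding L.ker_def by (auto simp: module_vec_simps)
  moreover have "inj_on (\<lambda>v. 1\<^sub>m n *\<^sub>v v) (carrier (module_vec TYPE('a) n))"
    by (auto simp: module_vec_simps inj_on_def)
  ultimately show ?thesis
    using L.inj_imp_dim_ker0 by simp
qed

lemma dim_full_subspace:
  "vectorspace.dim class_ring ((module_vec TYPE('a::field) n)\<lparr>carrier := carrier_vec n\<rparr>) = n"
proof -
  interpret Vn: vec_space "TYPE('a)" n .
  have "(module_vec TYPE('a) n)\<lparr>carrier := carrier_vec n\<rparr> = module_vec TYPE('a) n"
    by (simp add: module_vec_simps)
  then show ?thesis
    using Vn.dim_is_n by metis
qed

lemma short_exact_mat_dims: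
  fixes A :: "'a::field mat"
  assumes "A \<in> carrier_mat b a" "B \<in> carrier_mat c b"
    and "mat_kernel A = {0\<^sub>v a}" "mat_image A = mat_kernel B" "mat_image B = carrier_vec c"
  shows "b = a + c"
  using mat_rank_nullity[OF assms(1)] mat_rank_nullity[OF assms(2)] assms(3-5)
    dim_zero_subspace[where 'a='a and n=a] dim_full_subspace[where 'a='a and n=c]
  by simp

lemma mat_kernel_left_invertible:
  fixes F :: "'a::field mat"
  assumes F: "F \<in> carrier_mat b a" and G: "G \<in> carrier_mat a b" and GF: "G * F = 1\<^sub>m a"
  shows "mat_kernel F = {0\<^sub>v a}"
proof
  show "mat_kernel F \<subseteq> {0\<^sub>v a}"
  proof
    fix v assume "v \<in> mat_kernel F"
    then have v: "v \<in> carrier_vec a" and Fv: "F *\<^sub>v v = 0\<^sub>v b"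
      using mat_kernelD[OF F] by auto
    have "v = (G * F) *\<^sub>v v" using GF v by simp
    also have "\<dots> = G *\<^sub>v (F *\<^sub>v v)" using F G v by simp
    also have "\<dots> = 0\<^sub>v a" using Fv G by auto
    finally show "v \<in> {0\<^sub>v a}" by simp
  qed
  show "{0\<^sub>v a} \<subseteq> mat_kernel F"
  proof -
    have "F *\<^sub>v 0\<^sub>v a = 0\<^sub>v b" using F by auto
    then show ?thesis using mat_kernelI[OF F] by auto
  qed
qed

lemma mat_image_right_invertible:
  fixes F :: "'a::field mat"
  assumes F: "F \<in> carrier_mat b a" and G: "G \<in> carrier_mat a b" and FG: "F * G = 1\<^sub>m b"
  shows "mat_image F = carrier_vec b"
proof (intro equalityI subsetI)
  fix w :: "'a vec" assume w: "w \<in> carrier_vec b"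
  have "w = (F * G) *\<^sub>v w" using FG w by simp
  also have "\<dots> = F *\<^sub>v (G *\<^sub>v w)" using F G w by simp
  finally show "w \<in> mat_image F"
    unfolding mat_image_def using F G w by auto
qed (use F in \<open>auto simp: mat_image_def\<close>)

lemma mat_kernel_one_mat: "mat_kernel (1\<^sub>m n :: 'a::field mat) = {0\<^sub>v n}"
  by (rule mat_kernel_left_invertible[of _ n n "1\<^sub>m n"]) auto

lemma mat_image_one_mat: "mat_image (1\<^sub>m n :: 'a::field mat) = carrier_vec n"
  by (rule mat_image_right_invertible[of _ n n "1\<^sub>m n"]) auto

lemma carrier_vec_0: "carrier_vec 0 = {0\<^sub>v 0}"
  by auto

lemma mat_kernel_zero_cols: "mat_kernel (0\<^sub>m m 0 :: 'a::field mat) = {0\<^sub>v 0}"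
  by (auto simp: mat_kernel_def)

lemma mat_image_zero_cols: "mat_image (0\<^sub>m m 0 :: 'a::field mat) = {0\<^sub>v m}"
  unfolding mat_image_def by (auto simp: carrier_vec_0)

lemma mat_kernel_zero_rows: "mat_kernel (0\<^sub>m 0 n :: 'a::field mat) = carrier_vec n"
  by (auto simp: mat_kernel_def)

lemma mat_image_zero_rows: "mat_image (0\<^sub>m 0 n :: 'a::field mat) = carrier_vec 0"
  by (rule mat_image_right_invertible[of _ 0 n "0\<^sub>m n 0"]) (auto intro: empty_mat_eqI)

lemma biproduct_mat_exact:
  fixes i1 :: "'a::field mat"
  assumes i1: "i1 \<in> carrier_mat s a" and i2: "i2 \<in> carrier_mat s b"
    and p1: "p1 \<in> carrier_mat a s" and p2: "p2 \<in> carrier_mat b s"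
    and p1i1: "p1 * i1 = 1\<^sub>m a" and p2i2: "p2 * i2 = 1\<^sub>m b" and sum: "i1 * p1 + i2 * p2 = 1\<^sub>m s"
  shows "mat_kernel i1 = {0\<^sub>v a}" "mat_image i1 = mat_kernel p2" "mat_image p2 = carrier_vec b"
proof -
  show "mat_kernel i1 = {0\<^sub>v a}" by (rule mat_kernel_left_invertible[OF i1 p1 p1i1])
  show "mat_image p2 = carrier_vec b" by (rule mat_image_right_invertible[OF p2 i2 p2i2])
  have split: "x = i1 *\<^sub>v (p1 *\<^sub>v x) + i2 *\<^sub>v (p2 *\<^sub>v x)" if x: "x \<in> carrier_vec s" for x
  proof -
    have "x = (i1 * p1 + i2 * p2) *\<^sub>v x" using sum x by simp
    also have "\<dots> = (i1 * p1) *\<^sub>v x + (i2 * p2) *\<^sub>v x"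
      using i1 p1 i2 p2 x by (intro add_mult_distrib_mat_vec) auto
    also have "\<dots> = i1 *\<^sub>v (p1 *\<^sub>v x) + i2 *\<^sub>v (p2 *\<^sub>v x)"
      using i1 p1 i2 p2 x by simp
    finally show ?thesis .
  qed
  show "mat_image i1 = mat_kernel p2"
  proof (intro equalityI subsetI)
    fix x assume "x \<in> mat_image i1"
    then obtain v where v: "v \<in> carrier_vec a" and x: "x = i1 *\<^sub>v v"
      unfolding mat_image_def using i1 by auto
    have xs: "x \<in> carrier_vec s" using x v i1 by simp
    have "p1 *\<^sub>v x = v" using x p1 i1 v p1i1 by (simp flip: assoc_mult_mat_vec)
    then have x_eq: "x = x + i2 *\<^sub>v (p2 *\<^sub>v x)"
      using split[OF xs] x by simp
    have zero: "i2 *\<^sub>v (p2 *\<^sub>v x) = 0\<^sub>v s"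
    proof (rule eq_vecI)
      fix i assume "i < dim_vec (0\<^sub>v s :: 'a vec)"
      then show "(i2 *\<^sub>v (p2 *\<^sub>v x)) $ i = 0\<^sub>v s $ i"
        using arg_cong[OF x_eq, of "\<lambda>v. v $ i"] i2 by simp
    qed (use i2 in simp)
    have "p2 *\<^sub>v x = (p2 * i2) *\<^sub>v (p2 *\<^sub>v x)"
      using p2i2 p2 xs by simp
    also have "\<dots> = p2 *\<^sub>v (i2 *\<^sub>v (p2 *\<^sub>v x))"
      using p2 i2 xs by simp
    also have "\<dots> = 0\<^sub>v b" using zero p2 by auto
    finally show "x \<in> mat_kernel p2" using xs by (intro mat_kernelI[OF p2])
  next
    fix w assume "w \<in> mat_kernel p2"
    then have w: "w \<in> carrier_vec s" and p2w: "p2 *\<^sub>v w = 0\<^sub>v b"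
      using mat_kernelD[OF p2] by auto
    have "i2 *\<^sub>v 0\<^sub>v b = 0\<^sub>v s" using i2 by auto
    then have "w = i1 *\<^sub>v (p1 *\<^sub>v w)" using split[OF w] p2w i1 p1 w by auto
    then show "w \<in> mat_image i1" unfolding mat_image_def using i1 p1 w by auto
  qed
qed

section \<open>Persistence modules\<close>

lemma pmod_carrier_mat: "pmod M \<Longrightarrow> q \<le> r \<Longrightarrow> snd M q r \<in> carrier_mat (fst M r) (fst M q)"
  unfolding Defs.pmod_def is_functor_def by auto

lemma is_homD:
  assumes "is_hom M N f"
  shows "pmod M" "f q \<in> carrier_mat (fst N q) (fst M q)"
  using assms unfolding is_hom_def by auto

lemma short_exact_dims:
  assumes "short_exact A B C f g"
  shows "fst B q = fst A q + fst C q"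
proof -
  have f: "is_hom A B f" and g: "is_hom B C g"
    using assms unfolding short_exact_def by auto
  show ?thesis
    by (rule short_exact_mat_dims[OF is_homD(2)[OF f] is_homD(2)[OF g]])
      (use assms in \<open>auto simp: short_exact_def\<close>)
qed

lemma pmod_zero_pmod: "pmod (zero_pmod :: ('q::order, 'f::field) pmod)"
proof -
  have "(0\<^sub>m 0 0 :: 'f mat) = 1\<^sub>m 0" by (rule empty_mat_eqI) auto
  then show ?thesis unfolding zero_pmod_def Defs.pmod_def is_functor_def by simp
qed

lemma is_hom_from_zero_pmod:
  fixes M :: "('q::order, 'f::field) pmod"
  assumes "pmod M"
  shows "is_hom zero_pmod M (\<lambda>q. 0\<^sub>m (fst M q) 0)"
  unfolding is_hom_def
proof (intro conjI allI impI)
  fix q r :: 'q assume "q \<le> r"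
  then have "snd M q r \<in> carrier_mat (fst M r) (fst M q)"
    by (rule pmod_carrier_mat[OF assms])
  then show "snd M q r * 0\<^sub>m (fst M q) 0 = 0\<^sub>m (fst M r) 0 * snd zero_pmod q r"
    by (intro empty_mat_eqI[of _ "fst M r" 0]) (auto simp: zero_pmod_def)
qed (use pmod_zero_pmod assms in \<open>auto simp: zero_pmod_def\<close>)

lemma short_exact_from_iso:
  assumes "is_iso M N"
  obtains F where "short_exact zero_pmod M N (\<lambda>q. 0\<^sub>m (fst M q) 0) F"
proof -
  obtain F G where F: "is_hom M N F" and G: "is_hom N M G"
    and inv: "\<And>q. G q * F q = 1\<^sub>m (fst M q) \<and> F q * G q = 1\<^sub>m (fst N q)"
    using assms unfolding is_iso_def by blast
  have "mat_kernel (F q) = {0\<^sub>v (fst M q)}" "mat_image (F q) = carrier_vec (fst N q)" for q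
    using mat_kernel_left_invertible[OF is_homD(2)[OF F] is_homD(2)[OF G]]
      mat_image_right_invertible[OF is_homD(2)[OF F] is_homD(2)[OF G]] inv
    by auto
  then have "short_exact zero_pmod M N (\<lambda>q. 0\<^sub>m (fst M q) 0) F"
    unfolding short_exact_def using is_hom_from_zero_pmod[OF is_homD(1)[OF F]] F
    by (auto simp: mat_kernel_zero_cols mat_image_zero_cols zero_pmod_def)
  then show ?thesis by (rule that)
qed

lemma iso_dims:
  assumes "is_iso M N"
  shows "fst M q = fst N q"
proof -
  obtain F where "short_exact zero_pmod M N (\<lambda>q. 0\<^sub>m (fst M q) 0) F"
    using short_exact_from_iso[OF assms] .
  from short_exact_dims[OF this] show ?thesis by (simp add: zero_pmod_def)
qed

lemma is_iso_refl:
  fixes M :: "('q::order, 'f::field) pmod"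
  assumes M: "pmod M"
  shows "is_iso M M"
proof -
  have "is_hom M M (\<lambda>q. 1\<^sub>m (fst M q))"
    unfolding is_hom_def
  proof (intro conjI allI impI)
    fix q r :: 'q assume "q \<le> r"
    then have "snd M q r \<in> carrier_mat (fst M r) (fst M q)" by (rule pmod_carrier_mat[OF M])
    then show "snd M q r * 1\<^sub>m (fst M q) = 1\<^sub>m (fst M r) * snd M q r" by simp
  qed (use M in auto)
  then show ?thesis
    unfolding is_iso_def by (intro exI[of _ "\<lambda>q. 1\<^sub>m (fst M q)"]) auto
qed

lemma amplitude_zero_dims:
  assumes "amplitude \<C> \<alpha>" "Z \<in> \<C>" "\<And>q. fst Z q = 0"
  shows "\<alpha> Z = 0"
proof -
  have "fst Z = (\<lambda>_. 0)" using assms(3) by auto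
  then show ?thesis using assms(1,2) unfolding amplitude_def by blast
qed

lemma additive_amplitudeD:
  assumes "additive_amplitude \<C> \<alpha>"
  shows "amplitude \<C> \<alpha>"
    and "\<And>A B C f g. A \<in> \<C> \<Longrightarrow> B \<in> \<C> \<Longrightarrow> C \<in> \<C> \<Longrightarrow> short_exact A B C f g
           \<Longrightarrow> \<alpha> B = \<alpha> A + \<alpha> C"
  using assms unfolding additive_amplitude_def by blast+

lemma additive_amplitudeI:
  assumes "\<And>Z. Z \<in> \<C> \<Longrightarrow> fst Z = (\<lambda>_. 0) \<Longrightarrow> \<alpha> Z = 0"
    and "\<And>A B C f g. A \<in> \<C> \<Longrightarrow> B \<in> \<C> \<Longrightarrow> C \<in> \<C> \<Longrightarrow> short_exact A B C f g
           \<Longrightarrow> \<alpha> B = \<alpha> A + \<alpha> C"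
  shows "additive_amplitude \<C> \<alpha>"
proof -
  have "\<alpha> A \<le> \<alpha> B \<and> \<alpha> C \<le> \<alpha> B \<and> \<alpha> B \<le> \<alpha> A + \<alpha> C"
    if "A \<in> \<C>" "B \<in> \<C>" "C \<in> \<C>" "short_exact A B C f g" for A B C f g
    using assms(2)[OF that] by simp
  then show ?thesis unfolding additive_amplitude_def amplitude_def using assms by blast
qed

lemma additive_amplitude_iso:
  assumes \<alpha>: "additive_amplitude \<C> \<alpha>" and "zero_pmod \<in> \<C>" "M \<in> \<C>" "N \<in> \<C>"
    and "is_iso M N"
  shows "\<alpha> M = \<alpha> N"
proof -
  obtain F where "short_exact zero_pmod M N (\<lambda>q. 0\<^sub>m (fst M q) 0) F"
    using short_exact_from_iso[OF assms(5)] .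
  then have "\<alpha> M = \<alpha> zero_pmod + \<alpha> N"
    using additive_amplitudeD(2)[OF \<alpha>] assms(2-4) by blast
  moreover have "\<alpha> zero_pmod = 0"
    using amplitude_zero_dims[OF additive_amplitudeD(1)[OF \<alpha>] assms(2)] by (simp add: zero_pmod_def)
  ultimately show ?thesis by simp
qed

section \<open>Finite encodings\<close>

definition encoding :: "'q::order set set \<Rightarrow> nat \<Rightarrow> (nat \<Rightarrow> nat \<Rightarrow> bool) \<Rightarrow> ('q \<Rightarrow> nat) \<Rightarrow> bool"
  where "encoding X n lp e \<longleftrightarrow>
    reflp_on {..<n} lp \<and> antisymp_on {..<n} lp \<and> transp_on {..<n} lp \<and>
    (\<forall>q. e q < n) \<and> (\<forall>q r. q \<le> r \<longrightarrow> lp (e q) (e r)) \<and> (\<forall>i<n. e -` {i} \<in> X)"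

lemma encodingD:
  assumes "encoding X n lp e"
  shows "reflp_on {..<n} lp" "antisymp_on {..<n} lp" "transp_on {..<n} lp" "e q < n"
    "q \<le> r \<Longrightarrow> lp (e q) (e r)" "i < n \<Longrightarrow> e -` {i} \<in> X"
  using assms unfolding encoding_def by auto

lemma fin_encoded_iff:
  "fin_encoded X M \<longleftrightarrow> pmod M \<and>
     (\<exists>n lp e d m. encoding X n lp e \<and> is_functor {..<n} lp d m \<and> is_iso M (pullback e d m))"
proof -
  have "encoding X n lp e \<longleftrightarrow> (\<forall>i<n. lp i i) \<and> (\<forall>i<n. \<forall>j<n. lp i j \<and> lp j i \<longrightarrow> i = j) \<and>
      (\<forall>i<n. \<forall>j<n. \<forall>k<n. lp i j \<and> lp j k \<longrightarrow> lp i k) \<and> (\<forall>q. e q < n) \<and>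
      (\<forall>q r. q \<le> r \<longrightarrow> lp (e q) (e r)) \<and> (\<forall>i<n. e -` {i} \<in> X)" for n lp e
    unfolding encoding_def reflp_on_def antisymp_on_def transp_on_def Ball_def lessThan_iff
      imp_conjL
    by (rule refl)
  then show ?thesis
    unfolding fin_encoded_def by (simp only: conj_ac)
qed

lemma fst_pullback [simp]: "fst (pullback e d m) q = d (e q)"
  by (simp add: pullback_def)

lemma snd_pullback: "q \<le> r \<Longrightarrow> snd (pullback e d m) q r = m (e q) (e r)"
  by (simp add: pullback_def)

lemma is_functorD:
  assumes "is_functor D lp d m"
  shows "\<And>i j. i \<in> D \<Longrightarrow> j \<in> D \<Longrightarrow> lp i j \<Longrightarrow> m i j \<in> carrier_mat (d j) (d i)"
    "\<And>i. i \<in> D \<Longrightarrow> m i i = 1\<^sub>m (d i)"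
    "\<And>i j k. i \<in> D \<Longrightarrow> j \<in> D \<Longrightarrow> k \<in> D \<Longrightarrow> lp i j \<Longrightarrow> lp j k \<Longrightarrow> m i k = m j k * m i j"
  using assms unfolding is_functor_def by blast+

lemma pmod_pullback:
  fixes e :: "'q::order \<Rightarrow> nat"
  assumes e: "encoding X n lp e" and F: "is_functor {..<n} lp d m"
  shows "pmod (pullback e d m)"
proof -
  have e_lt: "e q \<in> {..<n}" for q using encodingD(4)[OF e] by simp
  note mono = encodingD(5)[OF e]
  show ?thesis
    unfolding Defs.pmod_def is_functor_def
  proof (intro conjI ballI allI impI)
    fix q r s :: 'q
    show "snd (pullback e d m) q r \<in> carrier_mat (fst (pullback e d m) r) (fst (pullback e d m) q)"
      if "q \<le> r"
      using is_functorD(1)[OF F e_lt e_lt mono[OF that]] that by (simp add: snd_pullback)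
    show "snd (pullback e d m) q q = 1\<^sub>m (fst (pullback e d m) q)"
      using is_functorD(2)[OF F e_lt] by (simp add: snd_pullback)
    show "snd (pullback e d m) q s = snd (pullback e d m) r s * snd (pullback e d m) q r"
      if "q \<le> r \<and> r \<le> s"
    proof -
      have "q \<le> s" using order_trans[OF conjunct1[OF that] conjunct2[OF that]] .
      then show ?thesis
        using is_functorD(3)[OF F e_lt e_lt e_lt mono[of q r] mono[of r s]] that
        by (simp add: snd_pullback)
    qed
    show "snd (pullback e d m) q r = 0\<^sub>m (fst (pullback e d m) r) (fst (pullback e d m) q)"
      if "\<not> q \<le> r"
      using that by (simp add: pullback_def)
  qed
qed

lemma pullback_in_VectX:
  assumes "encoding X n lp e" "is_functor {..<n} lp d m"
  shows "pullback e d m \<in> VectX X"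
  unfolding VectX_def fin_encoded_iff mem_Collect_eq
  using assms pmod_pullback[OF assms] is_iso_refl[OF pmod_pullback[OF assms]]
  by (intro conjI exI[of _ n] exI[of _ lp] exI[of _ e] exI[of _ d] exI[of _ m]) auto

lemma VectX_encodingE:
  fixes M :: "('q::order, 'f::field) pmod"
  assumes "M \<in> VectX X"
  obtains n lp e d and m :: "nat \<Rightarrow> nat \<Rightarrow> 'f mat"
  where "encoding X n lp e" "is_functor {..<n} lp d m" "is_iso M (pullback e d m)"
proof -
  from assms obtain n lp e d and m :: "nat \<Rightarrow> nat \<Rightarrow> 'f mat"
    where "encoding X n lp e \<and> is_functor {..<n} lp d m \<and> is_iso M (pullback e d m)"
    unfolding VectX_def fin_encoded_iff by blast
  with that show ?thesis by blast
qed

lemma encoding_vimage: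
  assumes X: "Sigma_Algebra.algebra UNIV X" and e: "encoding X n lp e"
  shows "e -` A \<in> X"
proof -
  interpret Sigma_Algebra.algebra UNIV X by (fact X)
  have "e -` A = (\<Union>i\<in>{i\<in>A. i < n}. e -` {i})"
    using encodingD(4)[OF e] by blast
  also have "\<dots> \<in> X"
    using encodingD(6)[OF e] by (intro finite_UN) auto
  finally show ?thesis .
qed

lemma is_functor_reindex:
  assumes F: "is_functor {..<n'} lp' d m" and \<pi>: "\<And>i. i < n \<Longrightarrow> \<pi> i < n'"
    and mono: "\<And>i j. lp i j \<Longrightarrow> lp' (\<pi> i) (\<pi> j)"
  shows "is_functor {..<n} lp (d \<circ> \<pi>) (\<lambda>i j. m (\<pi> i) (\<pi> j))"
  using F \<pi> mono unfolding is_functor_def by simp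

lemma pullback_comp: "pullback (\<pi> \<circ> e) d m = pullback e (d \<circ> \<pi>) (\<lambda>i j. m (\<pi> i) (\<pi> j))"
  by (simp add: pullback_def comp_def)

lemma encoding_product:
  assumes X: "Sigma_Algebra.algebra UNIV X"
    and e1: "encoding X n1 lp1 e1" and e2: "encoding X n2 lp2 e2"
  shows "encoding X (n1 * n2) (\<lambda>i j. lp1 (i div n2) (j div n2) \<and> lp2 (i mod n2) (j mod n2))
    (\<lambda>q. e1 q * n2 + e2 q)" (is "encoding X _ ?lp ?e")
proof -
  interpret Sigma_Algebra.algebra UNIV X by (fact X)
  have lt2: "e2 q < n2" for q by (rule encodingD(4)[OF e2])
  then have n2: "0 < n2" by (metis not_less0 gr0I)
  have div: "?e q div n2 = e1 q" and mod: "?e q mod n2 = e2 q" for q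
    using lt2[of q] n2 by simp_all
  have div_lt: "i div n2 \<in> {..<n1}" and mod_lt: "i mod n2 \<in> {..<n2}" if "i \<in> {..<n1 * n2}" for i
    using that n2 by (simp_all add: less_mult_imp_div_less)
  show ?thesis
    unfolding encoding_def
  proof (intro conjI allI impI)
    show "reflp_on {..<n1 * n2} ?lp"
      using reflp_onD[OF encodingD(1)[OF e1]] reflp_onD[OF encodingD(1)[OF e2]] div_lt mod_lt
      by (simp add: reflp_on_def)
    show "antisymp_on {..<n1 * n2} ?lp"
    proof (rule antisymp_onI)
      fix i j assume ij: "i \<in> {..<n1 * n2}" "j \<in> {..<n1 * n2}" "?lp i j" "?lp j i"
      then have "i div n2 = j div n2" "i mod n2 = j mod n2"
        using antisymp_onD[OF encodingD(2)[OF e1] div_lt div_lt]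
          antisymp_onD[OF encodingD(2)[OF e2] mod_lt mod_lt] by blast+
      then show "i = j" by (metis div_mult_mod_eq)
    qed
    show "transp_on {..<n1 * n2} ?lp"
    proof (rule transp_onI)
      fix i j k assume "i \<in> {..<n1 * n2}" "j \<in> {..<n1 * n2}" "k \<in> {..<n1 * n2}" "?lp i j" "?lp j k"
      then show "?lp i k"
        using transp_onD[OF encodingD(3)[OF e1] div_lt div_lt div_lt]
          transp_onD[OF encodingD(3)[OF e2] mod_lt mod_lt mod_lt] by blast
    qed
    show "?e q < n1 * n2" for q
    proof -
      have "?e q < (e1 q + 1) * n2" using lt2[of q] by simp
      also have "\<dots> \<le> n1 * n2" using encodingD(4)[OF e1, of q] by (intro mult_right_mono) auto
      finally show ?thesis .
    qed
    show "lp1 (?e q div n2) (?e r div n2)" "lp2 (?e q mod n2) (?e r mod n2)" if "q \<le> r" for q r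
      using encodingD(5)[OF e1 that] encodingD(5)[OF e2 that] by (simp_all only: div mod)
    show "?e -` {i} \<in> X" for i
    proof -
      have "?e q = i \<longleftrightarrow> e1 q = i div n2 \<and> e2 q = i mod n2" for q
        using div[of q] mod[of q] by (metis div_mult_mod_eq)
      then have "?e -` {i} = e1 -` {i div n2} \<inter> e2 -` {i mod n2}" by auto
      then show ?thesis using encoding_vimage[OF X e1] encoding_vimage[OF X e2] by auto
    qed
  qed
qed

lemma encoding_common_refinement:
  assumes X: "Sigma_Algebra.algebra UNIV X"
    and e1: "encoding X n1 lp1 e1" and e2: "encoding X n2 lp2 e2"
  obtains n lp e \<pi>1 \<pi>2 where "encoding X n lp e" "e1 = \<pi>1 \<circ> e" "e2 = \<pi>2 \<circ> e"
    "\<And>i. i < n \<Longrightarrow> \<pi>1 i < n1" "\<And>i. i < n \<Longrightarrow> \<pi>2 i < n2"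
    "\<And>i j. lp i j \<Longrightarrow> lp1 (\<pi>1 i) (\<pi>1 j)" "\<And>i j. lp i j \<Longrightarrow> lp2 (\<pi>2 i) (\<pi>2 j)"
proof -
  have lt2: "e2 q < n2" for q by (rule encodingD(4)[OF e2])
  then have n2: "0 < n2" by (metis not_less0 gr0I)
  have "e1 = (\<lambda>i. i div n2) \<circ> (\<lambda>q. e1 q * n2 + e2 q)" "e2 = (\<lambda>i. i mod n2) \<circ> (\<lambda>q. e1 q * n2 + e2 q)"
    using lt2 n2 by (simp_all add: fun_eq_iff)
  moreover have "i div n2 < n1" "i mod n2 < n2" if "i < n1 * n2" for i
    using that n2 by (simp_all add: less_mult_imp_div_less)
  ultimately show ?thesis
    using that[OF encoding_product[OF X e1 e2]] by blast
qed

section \<open>The algebra generated by the upsets in X\<close>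

lemma algebra_XUp: "Sigma_Algebra.algebra UNIV (XUp X)"
proof -
  define F where "F = {A. Sigma_Algebra.algebra UNIV A \<and> {U \<in> X. upset U} \<subseteq> A}"
  have "XUp X = \<Inter>F" unfolding XUp_def F_def ..
  moreover have "{} \<in> \<Inter>F" unfolding F_def by (auto simp: algebra_iff_Un)
  moreover have "UNIV - a \<in> \<Inter>F" if "a \<in> \<Inter>F" for a
    using that unfolding F_def by (auto simp: algebra_iff_Un)
  moreover have "a \<union> b \<in> \<Inter>F" if "a \<in> \<Inter>F" "b \<in> \<Inter>F" for a b
    using that unfolding F_def by (auto simp: algebra_iff_Un)
  ultimately show ?thesis
    unfolding algebra_iff_Un by blast
qed

lemma upset_in_XUp: "U \<in> X \<Longrightarrow> upset U \<Longrightarrow> U \<in> XUp X"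
  unfolding XUp_def by auto

lemma XUp_subset: "Sigma_Algebra.algebra UNIV A \<Longrightarrow> {U \<in> X. upset U} \<subseteq> A \<Longrightarrow> XUp X \<subseteq> A"
  unfolding XUp_def by auto

lemma upset_encoding_vimage:
  assumes e: "encoding X n lp e" and B: "\<And>i j. i \<in> B \<Longrightarrow> j < n \<Longrightarrow> lp i j \<Longrightarrow> j \<in> B"
  shows "upset (e -` B)"
  unfolding upset_def
proof (intro allI impI)
  fix u q assume "u \<in> e -` B \<and> u \<le> q"
  then show "q \<in> e -` B"
    using B[of "e u" "e q"] encodingD(4)[OF e, of q] encodingD(5)[OF e, of u q] by auto
qed

lemma encoding_fibre_in_XUp:
  assumes X: "Sigma_Algebra.algebra UNIV X" and e: "encoding X n lp e"
  shows "e -` {i} \<in> XUp X"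
proof -
  interpret XUp: Sigma_Algebra.algebra UNIV "XUp X" by (rule algebra_XUp)
  show ?thesis
  proof (cases "i < n")
    case False
    then have "e -` {i} = {}" using encodingD(4)[OF e] by fastforce
    then show ?thesis by simp
  next
    case True
    then have i: "i \<in> {..<n}" by simp
    define U where "U = {j. j < n \<and> lp i j}"
    define V where "V = {j. j < n \<and> lp i j \<and> j \<noteq> i}"
    have trans: "lp i k" if "lp i j" "lp j k" "j < n" "k < n" for j k
      using transp_onD[OF encodingD(3)[OF e] i] that by blast
    have "upset (e -` U)"
      by (rule upset_encoding_vimage[OF e]) (use trans in \<open>auto simp: U_def\<close>)
    moreover have "upset (e -` V)"
    proof (rule upset_encoding_vimage[OF e])
      fix j k assume "j \<in> V" "k < n" "lp j k"
      moreover have "k \<noteq> i"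
      proof
        assume "k = i"
        then have "j = i"
          using antisymp_onD[OF encodingD(2)[OF e], of i j] i \<open>j \<in> V\<close> \<open>lp j k\<close> by (simp add: V_def)
        then show False using \<open>j \<in> V\<close> by (simp add: V_def)
      qed
      ultimately show "k \<in> V" using trans by (auto simp: V_def)
    qed
    moreover have "e -` {i} = e -` U - e -` V"
      using reflp_onD[OF encodingD(1)[OF e] i] encodingD(4)[OF e] by (auto simp: U_def V_def)
    ultimately show ?thesis
      using upset_in_XUp[OF encoding_vimage[OF X e]] by (simp add: XUp.Diff)
  qed
qed

lemma encoding_vimage_in_XUp:
  assumes X: "Sigma_Algebra.algebra UNIV X" and e: "encoding X n lp e"
  shows "e -` A \<in> XUp X"
proof -
  interpret XUp: Sigma_Algebra.algebra UNIV "XUp X" by (rule algebra_XUp)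
  have "e -` A = (\<Union>i\<in>{i\<in>A. i < n}. e -` {i})"
    using encodingD(4)[OF e] by blast
  also have "\<dots> \<in> XUp X"
    using encoding_fibre_in_XUp[OF X e] by (intro XUp.finite_UN) auto
  finally show ?thesis .
qed

lemma encoding_upset:
  assumes X: "Sigma_Algebra.algebra UNIV X" and "U \<in> X" "upset U"
  shows "encoding X 2 (\<le>) (\<lambda>q. if q \<in> U then 1 else 0)"
proof -
  interpret Sigma_Algebra.algebra UNIV X by (fact X)
  have "(\<lambda>q. if q \<in> U then 1 else 0 :: nat) -` {i} =
      (if i = 0 then - U else if i = 1 then U else {})" for i
    by auto
  moreover have "- U \<in> X" using compl_sets[OF \<open>U \<in> X\<close>] by (simp add: Compl_eq_Diff_UNIV)
  ultimately have "(\<lambda>q. if q \<in> U then 1 else 0 :: nat) -` {i} \<in> X" for i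
    using \<open>U \<in> X\<close> by simp
  moreover have "(if q \<in> U then 1 else 0 :: nat) \<le> (if r \<in> U then 1 else 0)" if "q \<le> r" for q r
    using \<open>upset U\<close> that unfolding upset_def by auto
  ultimately show ?thesis
    by (auto simp: encoding_def reflp_on_def antisymp_on_def transp_on_def)
qed

lemma encoding_vimage_Un:
  assumes X: "Sigma_Algebra.algebra UNIV X"
    and e1: "encoding X n1 lp1 e1" and e2: "encoding X n2 lp2 e2"
  obtains n lp e A where "encoding X n lp e" "e1 -` A1 \<union> e2 -` A2 = e -` A"
proof -
  obtain n lp e \<pi>1 \<pi>2 where e: "encoding X n lp e" and "e1 = \<pi>1 \<circ> e" "e2 = \<pi>2 \<circ> e"
    by (rule encoding_common_refinement[OF X e1 e2])
  then have "e1 -` A1 \<union> e2 -` A2 = e -` (\<pi>1 -` A1 \<union> \<pi>2 -` A2)" by auto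
  with e show ?thesis by (rule that)
qed

lemma XUp_eq_encoding_vimages:
  assumes X: "Sigma_Algebra.algebra UNIV X"
  shows "XUp X = {e -` A | n lp e A. encoding X n lp e}"
proof -
  interpret Sigma_Algebra.algebra UNIV X by (fact X)
  define E where "E = {e -` A | n lp e A. encoding X n lp e}"
  have E_iff: "S \<in> E \<longleftrightarrow> (\<exists>n lp e A. encoding X n lp e \<and> S = e -` A)" for S
    unfolding E_def by blast
  have upsets: "U \<in> E" if "U \<in> X" "upset U" for U
  proof -
    have "U = (\<lambda>q. if q \<in> U then 1 else 0 :: nat) -` {1}" by auto
    then show ?thesis using encoding_upset[OF X that] unfolding E_iff by blast
  qed
  have "E \<subseteq> XUp X" unfolding subset_iff E_iff using encoding_vimage_in_XUp[OF X] by blast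
  moreover have "{} \<in> E"
  proof -
    have "encoding X 2 (\<le>) (\<lambda>q. if q \<in> UNIV then 1 else 0)"
      by (rule encoding_upset[OF X top]) (simp add: upset_def)
    moreover have "{} = (\<lambda>q. if q \<in> UNIV then 1 else 0 :: nat) -` {}" by simp
    ultimately show ?thesis unfolding E_iff by blast
  qed
  moreover have "UNIV - S \<in> E" if "S \<in> E" for S
  proof -
    obtain n lp e A where "encoding X n lp e" "S = e -` A" using \<open>S \<in> E\<close> unfolding E_iff by blast
    moreover have "UNIV - e -` A = e -` (- A)" by auto
    ultimately show ?thesis unfolding E_iff by metis
  qed
  moreover have "S \<union> T \<in> E" if "S \<in> E" "T \<in> E" for S T
  proof -
    obtain n1 lp1 e1 A1 where e1: "encoding X n1 lp1 e1" and S: "S = e1 -` A1"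
      using \<open>S \<in> E\<close> unfolding E_iff by blast
    obtain n2 lp2 e2 A2 where e2: "encoding X n2 lp2 e2" and T: "T = e2 -` A2"
      using \<open>T \<in> E\<close> unfolding E_iff by blast
    obtain n lp e A where "encoding X n lp e" "e1 -` A1 \<union> e2 -` A2 = e -` A"
      by (rule encoding_vimage_Un[OF X e1 e2])
    then show ?thesis unfolding E_iff S T by blast
  qed
  ultimately have "Sigma_Algebra.algebra UNIV E" "{U \<in> X. upset U} \<subseteq> E"
    using upsets unfolding algebra_iff_Un by blast+
  then have "XUp X \<subseteq> E" by (rule XUp_subset)
  with \<open>E \<subseteq> XUp X\<close> have "XUp X = E" by blast
  then show ?thesis unfolding E_def .
qed

section \<open>Discrete modules\<close>

text \<open>The module \<open>discrete_module e A k\<close> defined below is the direct sum, over i \<in> A, of k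
  copies of the interval module supported on the fibre of e over i.\<close>

definition discrete_dims :: "nat set \<Rightarrow> nat \<Rightarrow> nat \<Rightarrow> nat" where
  "discrete_dims A k i = (if i \<in> A then k else 0)"

definition discrete_maps :: "nat set \<Rightarrow> nat \<Rightarrow> nat \<Rightarrow> nat \<Rightarrow> 'f::field mat" where
  "discrete_maps A k i j =
    (if i = j \<and> i \<in> A then 1\<^sub>m k else 0\<^sub>m (discrete_dims A k j) (discrete_dims A k i))"

lemma discrete_maps_carrier:
  "discrete_maps A k i j \<in> carrier_mat (discrete_dims A k j) (discrete_dims A k i)"
  by (auto simp: discrete_maps_def discrete_dims_def)

lemma is_functor_discrete:
  assumes "antisymp_on D lp"
  shows "is_functor D lp (discrete_dims A k) (discrete_maps A k :: nat \<Rightarrow> nat \<Rightarrow> 'f::field mat)"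
  unfolding is_functor_def
proof (intro conjI ballI impI)
  fix i j l assume D: "i \<in> D" "j \<in> D" "l \<in> D" and lp: "lp i j \<and> lp j l"
  show "(discrete_maps A k i l :: 'f mat) = discrete_maps A k j l * discrete_maps A k i j"
  proof (cases "i = l \<and> i \<in> A")
    case True
    then have "j = i" using antisymp_onD[OF assms D(1,2)] lp by blast
    then show ?thesis using True by (simp add: discrete_maps_def discrete_dims_def)
  next
    case False
    then have "\<not> (j = l \<and> j \<in> A) \<or> \<not> (i = j \<and> i \<in> A)" by blast
    then show ?thesis
      using False discrete_maps_carrier[of A k i j] discrete_maps_carrier[of A k j l]
      by (auto simp: discrete_maps_def left_mult_zero_mat right_mult_zero_mat)
  qed
qed (auto simp: discrete_maps_def discrete_dims_def intro: empty_mat_eqI)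

definition discrete_module :: "('q::order \<Rightarrow> nat) \<Rightarrow> nat set \<Rightarrow> nat \<Rightarrow> ('q, 'f::field) pmod" where
  "discrete_module e A k = pullback e (discrete_dims A k) (discrete_maps A k)"

lemma fst_discrete_module: "fst (discrete_module e A k) q = (if e q \<in> A then k else 0)"
  by (simp add: discrete_module_def discrete_dims_def)

lemma snd_discrete_module:
  "q \<le> r \<Longrightarrow> snd (discrete_module e A k) q r = discrete_maps A k (e q) (e r)"
  by (simp add: discrete_module_def snd_pullback)

lemma discrete_module_in_VectX:
  assumes "encoding X n lp e"
  shows "discrete_module e A k \<in> VectX X"
  unfolding discrete_module_def
  by (rule pullback_in_VectX[OF assms is_functor_discrete[OF encodingD(2)[OF assms]]])

lemma discrete_module_cong:
  assumes "\<And>q. e q \<in> A \<Longrightarrow> k = k'"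
  shows "discrete_module e A k = discrete_module e A k'"
  using assms
  by (auto simp: discrete_module_def pullback_def discrete_maps_def discrete_dims_def fun_eq_iff)

lemma indicator_module_exists:
  assumes X: "Sigma_Algebra.algebra UNIV X" and S: "S \<in> XUp X"
  obtains N :: "('q::order, 'f::field) pmod"
  where "N \<in> VectX X" "fst N = (\<lambda>q. if q \<in> S then 1 else 0)"
proof -
  obtain n lp e A where e: "encoding X n lp e" and "S = e -` A"
    using S unfolding XUp_eq_encoding_vimages[OF X] by blast
  then have "fst (discrete_module e A 1 :: ('q, 'f) pmod) = (\<lambda>q. if q \<in> S then 1 else 0)"
    by (auto simp: fst_discrete_module)
  then show ?thesis using that discrete_module_in_VectX[OF e] by blast
qed

section \<open>Contents and the Hilbert integral\<close>

lemma content_iff_positive_additive: "content A \<nu> \<longleftrightarrow> positive A \<nu> \<and> additive A \<nu>"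
  by (auto simp: content_def positive_def additive_def)

lemma hilbert_integral_sum_superset:
  assumes "\<nu> {} = 0" "finite K" "range (fst M) \<subseteq> K"
  shows "hilbert_integral \<nu> M = (\<Sum>k\<in>K. of_nat k * \<nu> {q. fst M q = k})"
  unfolding hilbert_integral_def
proof (rule sum.mono_neutral_left[OF assms(2,3)])
  show "\<forall>k\<in>K - range (fst M). of_nat k * \<nu> {q. fst M q = k} = 0"
  proof
    fix k assume "k \<in> K - range (fst M)"
    then have "{q. fst M q = k} = {}" by auto
    then show "of_nat k * \<nu> {q. fst M q = k} = 0" using assms(1) by simp
  qed
qed

lemma hilbert_integral_indicator:
  assumes "\<nu> {} = 0" "fst M = (\<lambda>q. if q \<in> S then 1 else 0)"
  shows "hilbert_integral \<nu> M = \<nu> S"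
proof -
  have "hilbert_integral \<nu> M = (\<Sum>k\<in>{0, 1}. of_nat k * \<nu> {q. fst M q = k})"
    using assms by (intro hilbert_integral_sum_superset) auto
  then show ?thesis using assms(2) by simp
qed

lemma hilbert_integral_partition:
  assumes A: "Sigma_Algebra.algebra UNIV A" and \<nu>: "content A \<nu>" and J: "finite J"
    and B: "B ` J \<subseteq> A" "disjoint_family_on B J" "(\<Union>j\<in>J. B j) = UNIV"
    and c: "\<And>j q. j \<in> J \<Longrightarrow> q \<in> B j \<Longrightarrow> fst M q = c j"
  shows "hilbert_integral \<nu> M = (\<Sum>j\<in>J. of_nat (c j) * \<nu> (B j))"
proof -
  interpret Sigma_Algebra.algebra UNIV A by (fact A)
  have pos: "positive A \<nu>" and add: "additive A \<nu>"
    using \<nu> by (simp_all add: content_iff_positive_additive)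
  have level: "{q. fst M q = k} = (\<Union>j\<in>{j\<in>J. c j = k}. B j)" for k
  proof (intro equalityI subsetI)
    fix q assume "q \<in> {q. fst M q = k}"
    moreover obtain j where "j \<in> J" "q \<in> B j" using B(3) by blast
    ultimately show "q \<in> (\<Union>j\<in>{j\<in>J. c j = k}. B j)" using c by force
  qed (use c in auto)
  have "range (fst M) \<subseteq> c ` J"
  proof
    fix k assume "k \<in> range (fst M)"
    then obtain q where "k = fst M q" by blast
    moreover obtain j where "j \<in> J" "q \<in> B j" using B(3) by blast
    ultimately show "k \<in> c ` J" using c by auto
  qed
  then have "hilbert_integral \<nu> M = (\<Sum>k\<in>c ` J. of_nat k * \<nu> {q. fst M q = k})"
    using J pos by (intro hilbert_integral_sum_superset) (auto simp: positive_def)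
  also have "\<dots> = (\<Sum>k\<in>c ` J. \<Sum>j\<in>{j\<in>J. c j = k}. of_nat (c j) * \<nu> (B j))"
  proof (rule sum.cong[OF refl])
    fix k
    have "\<nu> {q. fst M q = k} = (\<Sum>j\<in>{j\<in>J. c j = k}. \<nu> (B j))"
      unfolding level using J B(1,2)
      by (intro additive_sum[OF pos add, symmetric]) (auto simp: disjoint_family_on_def)
    then show "of_nat k * \<nu> {q. fst M q = k} = (\<Sum>j\<in>{j\<in>J. c j = k}. of_nat (c j) * \<nu> (B j))"
      by (auto simp: sum_distrib_left intro!: sum.cong)
  qed
  also have "\<dots> = (\<Sum>j\<in>J. of_nat (c j) * \<nu> (B j))"
    using J by (rule sum.image_gen[symmetric])
  finally show ?thesis .
qed

lemma hilbert_integral_add: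
  assumes A: "Sigma_Algebra.algebra UNIV A" and \<nu>: "content A \<nu>"
    and fin: "finite (range (fst M))" "finite (range (fst N))"
    and lev: "\<And>k. {q. fst M q = k} \<in> A" "\<And>k. {q. fst N q = k} \<in> A"
    and K: "\<And>q. fst K q = fst M q + fst N q"
  shows "hilbert_integral \<nu> K = hilbert_integral \<nu> M + hilbert_integral \<nu> N"
proof -
  interpret Sigma_Algebra.algebra UNIV A by (fact A)
  define J where "J = range (fst M) \<times> range (fst N)"
  define B where "B t = {q. fst M q = fst t} \<inter> {q. fst N q = snd t}" for t
  have J: "finite J" using fin by (simp add: J_def)
  have BA: "B ` J \<subseteq> A" using lev by (auto simp: B_def)
  have disj: "disjoint_family_on B J" by (auto simp: disjoint_family_on_def B_def)
  have cover: "(\<Union>t\<in>J. B t) = UNIV" by (auto simp: J_def B_def)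
  note partition = hilbert_integral_partition[OF A \<nu> J BA disj cover]
  have "hilbert_integral \<nu> K = (\<Sum>t\<in>J. of_nat (fst t + snd t) * \<nu> (B t))"
    by (rule partition) (simp add: B_def K)
  also have "\<dots> = (\<Sum>t\<in>J. of_nat (fst t) * \<nu> (B t)) + (\<Sum>t\<in>J. of_nat (snd t) * \<nu> (B t))"
    by (simp add: distrib_right sum.distrib)
  also have "\<dots> = hilbert_integral \<nu> M + hilbert_integral \<nu> N"
    using partition[of M fst] partition[of N snd] by (simp add: B_def)
  finally show ?thesis .
qed

lemma VectX_hilbert_function_simple:
  assumes X: "Sigma_Algebra.algebra UNIV X" and M: "M \<in> VectX X"
  shows "finite (range (fst M))" "{q. fst M q = k} \<in> XUp X"
proof -
  obtain n lp e d m where e: "encoding X n lp e" and iso: "is_iso M (pullback e d m)"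
    using M by (rule VectX_encodingE)
  have fM: "fst M = d \<circ> e" using iso_dims[OF iso] by auto
  have "finite (range e)"
    by (rule finite_subset[of _ "{..<n}"]) (use encodingD(4)[OF e] in auto)
  moreover have "range (fst M) = d ` range e" by (auto simp: fM)
  ultimately show "finite (range (fst M))" by simp
  have "{q. fst M q = k} = e -` {i. d i = k}" by (auto simp: fM)
  then show "{q. fst M q = k} \<in> XUp X" using encoding_vimage_in_XUp[OF X e] by metis
qed

lemma additive_amplitude_hilbert_integral:
  assumes X: "Sigma_Algebra.algebra UNIV X" and \<nu>: "content (XUp X) \<nu>"
  shows "additive_amplitude (VectX X :: ('q::order, 'f::field) pmod set) (hilbert_integral \<nu>)"
proof (rule additive_amplitudeI)
  fix Z :: "('q, 'f) pmod" assume "fst Z = (\<lambda>_. 0)"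
  then show "hilbert_integral \<nu> Z = 0" by (simp add: hilbert_integral_def)
next
  fix A B C :: "('q, 'f) pmod" and f g
  assume A: "A \<in> VectX X" and "B \<in> VectX X" and C: "C \<in> VectX X" and "short_exact A B C f g"
  then show "hilbert_integral \<nu> B = hilbert_integral \<nu> A + hilbert_integral \<nu> C"
    by (intro hilbert_integral_add[OF algebra_XUp \<nu>] VectX_hilbert_function_simple[OF X A]
        VectX_hilbert_function_simple[OF X C] short_exact_dims)
qed

lemma content_eq_if_hilbert_integrals_eq:
  fixes \<nu>1 \<nu>2 :: "'q::order set \<Rightarrow> ennreal"
  assumes X: "Sigma_Algebra.algebra UNIV X" and \<nu>: "content (XUp X) \<nu>1" "content (XUp X) \<nu>2"
    and eq: "\<And>M. M \<in> (VectX X :: ('q, 'f::field) pmod set) \<Longrightarrow>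
               hilbert_integral \<nu>1 M = hilbert_integral \<nu>2 M"
    and S: "S \<in> XUp X"
  shows "\<nu>1 S = \<nu>2 S"
proof -
  obtain N :: "('q, 'f) pmod" where N: "N \<in> VectX X" "fst N = (\<lambda>q. if q \<in> S then 1 else 0)"
    using indicator_module_exists[OF X S] by blast
  have "\<nu>1 S = hilbert_integral \<nu>1 N"
    using \<nu>(1) N(2) by (simp add: hilbert_integral_indicator content_def)
  also have "\<dots> = hilbert_integral \<nu>2 N" by (rule eq[OF N(1)])
  also have "\<dots> = \<nu>2 S"
    using \<nu>(2) N(2) by (simp add: hilbert_integral_indicator content_def)
  finally show ?thesis .
qed

section \<open>Additive amplitudes on finitely encoded modules\<close>

lemma finite_has_maximal_with_property:
  assumes "finite A" and antisym: "antisymp_on A R" and trans: "transp_on A R" and "x \<in> A" "P x"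
  obtains m where "m \<in> A" "P m" "\<And>y. y \<in> A \<Longrightarrow> R m y \<Longrightarrow> y \<noteq> m \<Longrightarrow> \<not> P y"
proof -
  let ?S = "\<lambda>x y. R x y \<and> x \<noteq> y"
  have asym: "asymp_on A ?S"
  proof (rule asymp_onI)
    fix x y assume "x \<in> A" "y \<in> A" "?S x y"
    then show "\<not> ?S y x" using antisymp_onD[OF antisym] by blast
  qed
  have trans_S: "transp_on A ?S"
  proof (rule transp_onI)
    fix x y z assume xyz: "x \<in> A" "y \<in> A" "z \<in> A" and "?S x y" "?S y z"
    then have "R x z" using transp_onD[OF trans xyz] by blast
    moreover have "x \<noteq> z"
    proof
      assume "x = z"
      then have "x = y" using antisymp_onD[OF antisym xyz(1,2)] \<open>?S x y\<close> \<open>?S y z\<close> by blast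
      then show False using \<open>?S x y\<close> by blast
    qed
    ultimately show "?S x z" ..
  qed
  have "\<exists>x\<in>A. P x" using assms(4,5) by blast
  then obtain m where "m \<in> A" "P m" "\<forall>y\<in>A. ?S m y \<longrightarrow> \<not> P y"
    using Finite_Set.bex_max_element_with_property[OF assms(1) asym trans_S] by blast
  then show ?thesis using that by blast
qed

lemma encoding_maximal_support:
  assumes e: "encoding X n lp e" and "i < n" "d i \<noteq> 0"
  obtains p where "p < n" "d p \<noteq> 0" "\<And>j. j < n \<Longrightarrow> lp p j \<Longrightarrow> j \<noteq> p \<Longrightarrow> d j = 0"
proof -
  obtain p where "p \<in> {..<n}" "d p \<noteq> 0"
    and "\<And>j. j \<in> {..<n} \<Longrightarrow> lp p j \<Longrightarrow> j \<noteq> p \<Longrightarrow> \<not> d j \<noteq> 0"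
    by (rule finite_has_maximal_with_property[where P = "\<lambda>i. d i \<noteq> 0",
          OF finite_lessThan encodingD(2,3)[OF e]]) (use assms(2,3) in auto)
  then show ?thesis using that by blast
qed

lemma is_functor_delete_maximal:
  fixes m :: "nat \<Rightarrow> nat \<Rightarrow> 'f::field mat"
  assumes F: "is_functor {..<n} lp d m"
    and max: "\<And>j. j < n \<Longrightarrow> lp p j \<Longrightarrow> j \<noteq> p \<Longrightarrow> d j = 0"
  shows "is_functor {..<n} lp (d(p := 0))
    (\<lambda>i j. if i = p \<or> j = p then 0\<^sub>m ((d(p := 0)) j) ((d(p := 0)) i) else m i j)"
    (is "is_functor _ _ ?d ?m")
proof -
  have carrier: "?m i j \<in> carrier_mat (?d j) (?d i)" if "i < n" "j < n" "lp i j" for i j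
    using is_functorD(1)[OF F] that by auto
  show ?thesis
    unfolding is_functor_def
  proof (intro conjI ballI impI)
    fix i j l assume ijl: "i \<in> {..<n}" "j \<in> {..<n}" "l \<in> {..<n}" and lp: "lp i j \<and> lp j l"
    have comp: "m i l = m j l * m i j" using is_functorD(3)[OF F ijl] lp by simp
    show "?m i l = ?m j l * ?m i j"
    proof (cases "?d l = 0 \<or> ?d i = 0")
      case True
      have "?m i l \<in> carrier_mat (?d l) (?d i)"
        using comp is_functorD(1)[OF F] ijl lp by (auto intro: mult_carrier_mat)
      moreover have "?m j l * ?m i j \<in> carrier_mat (?d l) (?d i)"
        using ijl lp by (intro mult_carrier_mat[OF carrier carrier]) auto
      ultimately show ?thesis using True by (intro empty_mat_eqI) auto
    next
      case False
      then have "i \<noteq> p" "l \<noteq> p" "d l \<noteq> 0" by (auto split: if_splits)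
      moreover have "j \<noteq> p" using max[of l] \<open>l \<noteq> p\<close> \<open>d l \<noteq> 0\<close> ijl lp by auto
      ultimately show ?thesis using comp by simp
    qed
  qed (use carrier is_functorD(2)[OF F] in \<open>auto intro: empty_mat_eqI\<close>)
qed

lemma is_hom_maximal_fibre_inclusion:
  fixes e :: "'q::order \<Rightarrow> nat" and m :: "nat \<Rightarrow> nat \<Rightarrow> 'f::field mat"
  assumes e: "encoding X n lp e" and F: "is_functor {..<n} lp d m" and p: "p < n"
    and max: "\<And>j. j < n \<Longrightarrow> lp p j \<Longrightarrow> j \<noteq> p \<Longrightarrow> d j = 0"
  shows "is_hom (discrete_module e {p} (d p)) (pullback e d m)
    (\<lambda>q. if e q = p then 1\<^sub>m (d p) else 0\<^sub>m (d (e q)) 0)" (is "is_hom ?S ?M ?f")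
proof -
  have pS: "pmod ?S" unfolding discrete_module_def
    by (rule pmod_pullback[OF e is_functor_discrete[OF encodingD(2)[OF e]]])
  have pM: "pmod ?M" by (rule pmod_pullback[OF e F])
  have fc: "?f q \<in> carrier_mat (fst ?M q) (fst ?S q)" for q
    by (simp add: fst_discrete_module)
  show ?thesis
    unfolding is_hom_def
  proof (intro conjI allI impI pS pM fc)
    fix q r :: 'q assume qr: "q \<le> r"
    have "snd ?M q r * ?f q \<in> carrier_mat (fst ?M r) (fst ?S q)"
      "?f r * snd ?S q r \<in> carrier_mat (fst ?M r) (fst ?S q)"
      using mult_carrier_mat[OF pmod_carrier_mat[OF pM qr] fc]
        mult_carrier_mat[OF fc pmod_carrier_mat[OF pS qr]] .
    moreover have "d (e r) = 0" if "e q = p" "e r \<noteq> p"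
      using max[OF encodingD(4)[OF e]] encodingD(5)[OF e qr] that by simp
    ultimately show "snd ?M q r * ?f q = ?f r * snd ?S q r"
      using qr is_functorD(2)[OF F] p
      by (cases "e q = p"; cases "e r = p")
        (auto simp: fst_discrete_module snd_discrete_module snd_pullback discrete_maps_def
          intro: empty_mat_eqI)
  qed
qed

lemma is_hom_maximal_fibre_deletion:
  fixes e :: "'q::order \<Rightarrow> nat" and m m' :: "nat \<Rightarrow> nat \<Rightarrow> 'f::field mat"
  assumes e: "encoding X n lp e" and F: "is_functor {..<n} lp d m"
    and max: "\<And>j. j < n \<Longrightarrow> lp p j \<Longrightarrow> j \<noteq> p \<Longrightarrow> d j = 0"
    and F': "is_functor {..<n} lp (d(p := 0)) m'" and m': "\<And>i j. i \<noteq> p \<Longrightarrow> j \<noteq> p \<Longrightarrow> m' i j = m i j"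
  shows "is_hom (pullback e d m) (pullback e (d(p := 0)) m')
    (\<lambda>q. if e q = p then 0\<^sub>m 0 (d p) else 1\<^sub>m (d (e q)))" (is "is_hom ?M ?C ?g")
proof -
  have pM: "pmod ?M" by (rule pmod_pullback[OF e F])
  have pC: "pmod ?C" by (rule pmod_pullback[OF e F'])
  have gc: "?g q \<in> carrier_mat (fst ?C q) (fst ?M q)" for q
    by simp
  show ?thesis
    unfolding is_hom_def
  proof (intro conjI allI impI pM pC gc)
    fix q r :: 'q assume qr: "q \<le> r"
    have "snd ?C q r * ?g q \<in> carrier_mat (fst ?C r) (fst ?M q)"
      "?g r * snd ?M q r \<in> carrier_mat (fst ?C r) (fst ?M q)"
      using mult_carrier_mat[OF pmod_carrier_mat[OF pC qr] gc]
        mult_carrier_mat[OF gc pmod_carrier_mat[OF pM qr]] .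
    moreover have "d (e r) = 0" if "e q = p" "e r \<noteq> p"
      using max[OF encodingD(4)[OF e]] encodingD(5)[OF e qr] that by simp
    moreover have "m (e q) (e r) \<in> carrier_mat (d (e r)) (d (e q))"
      using pmod_carrier_mat[OF pM qr] qr by (simp add: snd_pullback)
    ultimately show "snd ?C q r * ?g q = ?g r * snd ?M q r"
      using qr m'
      by (cases "e q = p"; cases "e r = p") (auto simp: snd_pullback intro: empty_mat_eqI)
  qed
qed

lemma short_exact_maximal_fibre:
  fixes e :: "'q::order \<Rightarrow> nat" and m m' :: "nat \<Rightarrow> nat \<Rightarrow> 'f::field mat"
  assumes e: "encoding X n lp e" and F: "is_functor {..<n} lp d m" and p: "p < n"
    and max: "\<And>j. j < n \<Longrightarrow> lp p j \<Longrightarrow> j \<noteq> p \<Longrightarrow> d j = 0"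
    and F': "is_functor {..<n} lp (d(p := 0)) m'" and m': "\<And>i j. i \<noteq> p \<Longrightarrow> j \<noteq> p \<Longrightarrow> m' i j = m i j"
  shows "short_exact (discrete_module e {p} (d p)) (pullback e d m) (pullback e (d(p := 0)) m')
    (\<lambda>q. if e q = p then 1\<^sub>m (d p) else 0\<^sub>m (d (e q)) 0)
    (\<lambda>q. if e q = p then 0\<^sub>m 0 (d p) else 1\<^sub>m (d (e q)))"
  unfolding short_exact_def
  using is_hom_maximal_fibre_inclusion[OF e F p max] is_hom_maximal_fibre_deletion[OF e F max F' m']
  by (simp add: fst_discrete_module mat_kernel_one_mat mat_image_one_mat mat_kernel_zero_cols
      mat_image_zero_cols mat_kernel_zero_rows mat_image_zero_rows)

lemma additive_amplitude_pullback:
  fixes \<alpha> :: "('q::order, 'f::field) pmod \<Rightarrow> ennreal" and e :: "'q \<Rightarrow> nat"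
    and m :: "nat \<Rightarrow> nat \<Rightarrow> 'f mat"
  assumes \<alpha>: "additive_amplitude (VectX X) \<alpha>" and e: "encoding X n lp e"
    and F: "is_functor {..<n} lp d m"
  shows "\<alpha> (pullback e d m) = (\<Sum>i<n. \<alpha> (discrete_module e {i} (d i)))"
  using F
proof (induction "card {i. i < n \<and> d i \<noteq> 0}" arbitrary: d m rule: less_induct)
  case less
  have amp: "amplitude (VectX X) \<alpha>" by (rule additive_amplitudeD(1)[OF \<alpha>])
  have zero: "\<alpha> (discrete_module e {i} 0) = 0" for i
    by (rule amplitude_zero_dims[OF amp discrete_module_in_VectX[OF e]])
      (simp add: fst_discrete_module)
  show ?case
  proof (cases "\<exists>i<n. d i \<noteq> 0")
    case False
    then have "\<alpha> (pullback e d m) = 0"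
      using encodingD(4)[OF e]
      by (intro amplitude_zero_dims[OF amp pullback_in_VectX[OF e less.prems]]) auto
    moreover have "(\<Sum>i<n. \<alpha> (discrete_module e {i} (d i))) = 0" using False zero by simp
    ultimately show ?thesis by simp
  next
    case True
    then obtain i where "i < n" "d i \<noteq> 0" by blast
    then obtain p where p: "p < n" "d p \<noteq> 0"
      and max: "\<And>j. j < n \<Longrightarrow> lp p j \<Longrightarrow> j \<noteq> p \<Longrightarrow> d j = 0"
      by (rule encoding_maximal_support[OF e]) blast
    define d' where "d' = d(p := 0)"
    define m' :: "nat \<Rightarrow> nat \<Rightarrow> 'f mat"
      where "m' i j = (if i = p \<or> j = p then 0\<^sub>m (d' j) (d' i) else m i j)" for i j
    have F': "is_functor {..<n} lp d' m'"
      unfolding d'_def m'_def[abs_def] by (rule is_functor_delete_maximal[OF less.prems max])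
    have "short_exact (discrete_module e {p} (d p)) (pullback e d m) (pullback e d' m')
      (\<lambda>q. if e q = p then 1\<^sub>m (d p) else 0\<^sub>m (d (e q)) 0)
      (\<lambda>q. if e q = p then 0\<^sub>m 0 (d p) else 1\<^sub>m (d (e q)))"
      using short_exact_maximal_fibre[OF e less.prems _ max F'[unfolded d'_def]] p
      by (simp add: d'_def m'_def)
    then have "\<alpha> (pullback e d m) = \<alpha> (discrete_module e {p} (d p)) + \<alpha> (pullback e d' m')"
      by (rule additive_amplitudeD(2)[OF \<alpha> discrete_module_in_VectX[OF e]
            pullback_in_VectX[OF e less.prems] pullback_in_VectX[OF e F']])
    also have "\<alpha> (pullback e d' m') = (\<Sum>i<n. \<alpha> (discrete_module e {i} (d' i)))"
    proof (rule less.hyps[OF _ F'])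
      have "{i. i < n \<and> d' i \<noteq> 0} \<subset> {i. i < n \<and> d i \<noteq> 0}" using p by (auto simp: d'_def)
      then show "card {i. i < n \<and> d' i \<noteq> 0} < card {i. i < n \<and> d i \<noteq> 0}"
        by (rule psubset_card_mono[rotated]) simp
    qed
    also have "\<alpha> (discrete_module e {p} (d p)) + \<dots> = (\<Sum>i<n. \<alpha> (discrete_module e {i} (d i)))"
      using p(1) zero by (simp add: sum.remove d'_def cong: sum.cong_simp)
    finally show ?thesis .
  qed
qed

lemma additive_amplitude_encoded:
  fixes \<alpha> :: "('q::order, 'f::field) pmod \<Rightarrow> ennreal"
  assumes \<alpha>: "additive_amplitude (VectX X) \<alpha>" and zero: "zero_pmod \<in> (VectX X :: ('q, 'f) pmod set)"
    and M: "M \<in> VectX X" and e: "encoding X n lp e" and F: "is_functor {..<n} lp d m"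
    and iso: "is_iso M (pullback e d m)"
  shows "\<alpha> M = (\<Sum>i<n. \<alpha> (discrete_module e {i} (d i)))"
proof -
  have "\<alpha> M = \<alpha> (pullback e d m)"
    by (rule additive_amplitude_iso[OF \<alpha> zero M _ iso]) (rule pullback_in_VectX[OF e F])
  then show ?thesis using additive_amplitude_pullback[OF \<alpha> e F] by simp
qed

lemma additive_amplitude_eq_if_dims_eq:
  fixes \<alpha> :: "('q::order, 'f::field) pmod \<Rightarrow> ennreal"
  assumes X: "Sigma_Algebra.algebra UNIV X" and \<alpha>: "additive_amplitude (VectX X) \<alpha>"
    and zero: "zero_pmod \<in> (VectX X :: ('q, 'f) pmod set)" and M: "M \<in> VectX X" and N: "N \<in> VectX X"
    and dims: "fst M = fst N"
  shows "\<alpha> M = \<alpha> N"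
proof -
  obtain n1 lp1 e1 d1 m1 where e1: "encoding X n1 lp1 e1" and F1: "is_functor {..<n1} lp1 d1 m1"
    and iso1: "is_iso M (pullback e1 d1 m1)"
    using M by (rule VectX_encodingE)
  obtain n2 lp2 e2 d2 m2 where e2: "encoding X n2 lp2 e2" and F2: "is_functor {..<n2} lp2 d2 m2"
    and iso2: "is_iso N (pullback e2 d2 m2)"
    using N by (rule VectX_encodingE)
  obtain n lp e \<pi>1 \<pi>2 where e: "encoding X n lp e" and e12: "e1 = \<pi>1 \<circ> e" "e2 = \<pi>2 \<circ> e"
    and \<pi>1: "\<And>i. i < n \<Longrightarrow> \<pi>1 i < n1" and \<pi>2: "\<And>i. i < n \<Longrightarrow> \<pi>2 i < n2"
    and mono1: "\<And>i j. lp i j \<Longrightarrow> lp1 (\<pi>1 i) (\<pi>1 j)" and mono2: "\<And>i j. lp i j \<Longrightarrow> lp2 (\<pi>2 i) (\<pi>2 j)"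
    using encoding_common_refinement[OF X e1 e2] by metis
  have "is_iso M (pullback e (d1 \<circ> \<pi>1) (\<lambda>i j. m1 (\<pi>1 i) (\<pi>1 j)))"
    using iso1 unfolding e12 pullback_comp .
  then have "\<alpha> M = (\<Sum>i<n. \<alpha> (discrete_module e {i} ((d1 \<circ> \<pi>1) i)))"
    using additive_amplitude_encoded[OF \<alpha> zero M e is_functor_reindex[OF F1 \<pi>1 mono1]] by simp
  also have "\<dots> = (\<Sum>i<n. \<alpha> (discrete_module e {i} ((d2 \<circ> \<pi>2) i)))"
  proof (intro sum.cong refl arg_cong[where f = \<alpha>] discrete_module_cong)
    fix i q assume "e q \<in> {i}"
    then show "(d1 \<circ> \<pi>1) i = (d2 \<circ> \<pi>2) i"
      using iso_dims[OF iso1, of q] iso_dims[OF iso2, of q] dims e12 by auto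
  qed
  also have "\<dots> = \<alpha> N"
  proof -
    have "is_iso N (pullback e (d2 \<circ> \<pi>2) (\<lambda>i j. m2 (\<pi>2 i) (\<pi>2 j)))"
      using iso2 unfolding e12 pullback_comp .
    then show ?thesis
      using additive_amplitude_encoded[OF \<alpha> zero N e is_functor_reindex[OF F2 \<pi>2 mono2]] by simp
  qed
  finally show ?thesis .
qed

lemma abelian_subcat_zero: "abelian_subcat \<C> \<Longrightarrow> zero_pmod \<in> \<C>"
  unfolding abelian_subcat_def by blast

lemma abelian_subcat_short_exact_biproduct:
  assumes "abelian_subcat \<C>" "M \<in> \<C>" "N \<in> \<C>"
  obtains S f g where "S \<in> \<C>" "short_exact M S N f g"
proof -
  obtain S i1 i2 p1 p2 where "S \<in> \<C>"
    and homs: "is_hom M S i1" "is_hom N S i2" "is_hom S M p1" "is_hom S N p2"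
    and "\<And>q. p1 q * i1 q = 1\<^sub>m (fst M q) \<and> p2 q * i2 q = 1\<^sub>m (fst N q) \<and>
              i1 q * p1 q + i2 q * p2 q = 1\<^sub>m (fst S q)"
    using assms unfolding abelian_subcat_def by meson
  then have "short_exact M S N i1 p2"
    unfolding short_exact_def
    using biproduct_mat_exact[OF is_homD(2)[OF homs(1)] is_homD(2)[OF homs(2)]
        is_homD(2)[OF homs(3)] is_homD(2)[OF homs(4)]]
    by blast
  with \<open>S \<in> \<C>\<close> show ?thesis by (rule that)
qed

lemma additive_amplitude_dims_add:
  fixes \<alpha> :: "('q::order, 'f::field) pmod \<Rightarrow> ennreal"
  assumes X: "Sigma_Algebra.algebra UNIV X" and ab: "abelian_subcat (VectX X :: ('q, 'f) pmod set)"
    and \<alpha>: "additive_amplitude (VectX X) \<alpha>"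
    and M: "M \<in> VectX X" and N: "N \<in> VectX X" and K: "K \<in> VectX X"
    and dims: "\<And>q. fst K q = fst M q + fst N q"
  shows "\<alpha> K = \<alpha> M + \<alpha> N"
proof -
  obtain S f g where S: "S \<in> VectX X" and se: "short_exact M S N f g"
    by (rule abelian_subcat_short_exact_biproduct[OF ab M N])
  have "fst K = fst S" using short_exact_dims[OF se] dims by auto
  then have "\<alpha> K = \<alpha> S"
    by (rule additive_amplitude_eq_if_dims_eq[OF X \<alpha> abelian_subcat_zero[OF ab] K S])
  also have "\<dots> = \<alpha> M + \<alpha> N" by (rule additive_amplitudeD(2)[OF \<alpha> M S N se])
  finally show ?thesis .
qed

lemma additive_amplitudes_eqI:
  fixes \<alpha> \<beta> :: "('q::order, 'f::field) pmod \<Rightarrow> ennreal"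
  assumes X: "Sigma_Algebra.algebra UNIV X" and ab: "abelian_subcat (VectX X :: ('q, 'f) pmod set)"
    and \<alpha>: "additive_amplitude (VectX X) \<alpha>" and \<beta>: "additive_amplitude (VectX X) \<beta>"
    and indicators: "\<And>N S. N \<in> VectX X \<Longrightarrow> fst N = (\<lambda>q. if q \<in> S then 1 else 0) \<Longrightarrow> \<alpha> N = \<beta> N"
    and M: "M \<in> VectX X"
  shows "\<alpha> M = \<beta> M"
proof -
  have zero: "zero_pmod \<in> (VectX X :: ('q, 'f) pmod set)" by (rule abelian_subcat_zero[OF ab])
  obtain n lp e d m where e: "encoding X n lp e" and F: "is_functor {..<n} lp d m"
    and iso: "is_iso M (pullback e d m)"
    using M by (rule VectX_encodingE)
  have "\<alpha> (discrete_module e {i} k) = \<beta> (discrete_module e {i} k)" for i k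
  proof (induction k)
    case 0
    have "fst (discrete_module e {i} 0) q = 0" for q by (simp add: fst_discrete_module)
    then show ?case
      using amplitude_zero_dims[OF additive_amplitudeD(1)[OF \<alpha>] discrete_module_in_VectX[OF e]]
        amplitude_zero_dims[OF additive_amplitudeD(1)[OF \<beta>] discrete_module_in_VectX[OF e]]
      by metis
  next
    case (Suc k)
    have dims: "fst (discrete_module e {i} (Suc k)) q =
        fst (discrete_module e {i} 1) q + fst (discrete_module e {i} k) q" for q
      by (simp add: fst_discrete_module)
    have "fst (discrete_module e {i} 1) = (\<lambda>q. if q \<in> e -` {i} then 1 else 0)"
      by (auto simp: fst_discrete_module)
    then have "\<alpha> (discrete_module e {i} 1) = \<beta> (discrete_module e {i} 1)"
      by (rule indicators[OF discrete_module_in_VectX[OF e]])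
    then show ?case
      using additive_amplitude_dims_add[OF X ab \<alpha>] additive_amplitude_dims_add[OF X ab \<beta>]
        discrete_module_in_VectX[OF e] dims Suc.IH by metis
  qed
  then show ?thesis
    using additive_amplitude_encoded[OF \<alpha> zero M e F iso]
      additive_amplitude_encoded[OF \<beta> zero M e F iso]
    by simp
qed

definition amplitude_content ::
    "'q::order set set \<Rightarrow> (('q, 'f::field) pmod \<Rightarrow> ennreal) \<Rightarrow> 'q set \<Rightarrow> ennreal"
  where "amplitude_content X \<alpha> S = \<alpha> (SOME N. N \<in> VectX X \<and> fst N = (\<lambda>q. if q \<in> S then 1 else 0))"

lemma amplitude_content_eq:
  fixes \<alpha> :: "('q::order, 'f::field) pmod \<Rightarrow> ennreal"
  assumes X: "Sigma_Algebra.algebra UNIV X" and zero: "zero_pmod \<in> (VectX X :: ('q, 'f) pmod set)"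
    and \<alpha>: "additive_amplitude (VectX X) \<alpha>"
    and N: "N \<in> VectX X" "fst N = (\<lambda>q. if q \<in> S then 1 else 0)"
  shows "amplitude_content X \<alpha> S = \<alpha> N"
proof -
  let ?P = "\<lambda>N :: ('q, 'f) pmod. N \<in> VectX X \<and> fst N = (\<lambda>q. if q \<in> S then 1 else 0)"
  have "?P N" using N by blast
  then have "?P (SOME N. ?P N)" by (rule someI)
  then show ?thesis
    unfolding amplitude_content_def using N
    by (intro additive_amplitude_eq_if_dims_eq[OF X \<alpha> zero]) auto
qed

lemma content_amplitude_content:
  fixes \<alpha> :: "('q::order, 'f::field) pmod \<Rightarrow> ennreal"
  assumes X: "Sigma_Algebra.algebra UNIV X" and ab: "abelian_subcat (VectX X :: ('q, 'f) pmod set)"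
    and \<alpha>: "additive_amplitude (VectX X) \<alpha>"
  shows "content (XUp X) (amplitude_content X \<alpha>)"
  unfolding content_def
proof (intro conjI ballI impI)
  interpret XUp: Sigma_Algebra.algebra UNIV "XUp X" by (rule algebra_XUp)
  have zero: "zero_pmod \<in> (VectX X :: ('q, 'f) pmod set)" by (rule abelian_subcat_zero[OF ab])
  note eq = amplitude_content_eq[OF X zero \<alpha>]
  show "amplitude_content X \<alpha> {} = 0"
    using eq[OF zero] amplitude_zero_dims[OF additive_amplitudeD(1)[OF \<alpha>] zero]
    by (simp add: zero_pmod_def)
  fix S T assume S: "S \<in> XUp X" and T: "T \<in> XUp X" and disj: "S \<inter> T = {}"
  obtain NS :: "('q, 'f) pmod" where NS: "NS \<in> VectX X" "fst NS = (\<lambda>q. if q \<in> S then 1 else 0)"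
    by (rule indicator_module_exists[OF X S])
  obtain NT :: "('q, 'f) pmod" where NT: "NT \<in> VectX X" "fst NT = (\<lambda>q. if q \<in> T then 1 else 0)"
    by (rule indicator_module_exists[OF X T])
  obtain NST :: "('q, 'f) pmod"
    where NST: "NST \<in> VectX X" "fst NST = (\<lambda>q. if q \<in> S \<union> T then 1 else 0)"
    by (rule indicator_module_exists[OF X XUp.Un[OF S T]])
  have "\<alpha> NST = \<alpha> NS + \<alpha> NT"
    using disj NS NT NST by (intro additive_amplitude_dims_add[OF X ab \<alpha>]) auto
  then show "amplitude_content X \<alpha> (S \<union> T) = amplitude_content X \<alpha> S + amplitude_content X \<alpha> T"
    using eq[OF NS] eq[OF NT] eq[OF NST] by simp
qed

lemma additive_amplitude_eq_hilbert_integral: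
  fixes \<alpha> :: "('q::order, 'f::field) pmod \<Rightarrow> ennreal"
  assumes X: "Sigma_Algebra.algebra UNIV X" and ab: "abelian_subcat (VectX X :: ('q, 'f) pmod set)"
    and \<alpha>: "additive_amplitude (VectX X) \<alpha>" and M: "M \<in> VectX X"
  shows "\<alpha> M = hilbert_integral (amplitude_content X \<alpha>) M"
proof (rule additive_amplitudes_eqI[OF X ab \<alpha> _ _ M])
  have content: "content (XUp X) (amplitude_content X \<alpha>)"
    by (rule content_amplitude_content[OF X ab \<alpha>])
  then show "additive_amplitude (VectX X) (hilbert_integral (amplitude_content X \<alpha>))"
    by (rule additive_amplitude_hilbert_integral[OF X])
  fix N :: "('q, 'f) pmod" and S assume "N \<in> VectX X" "fst N = (\<lambda>q. if q \<in> S then 1 else 0)"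
  then show "\<alpha> N = hilbert_integral (amplitude_content X \<alpha>) N"
    using amplitude_content_eq[OF X abelian_subcat_zero[OF ab] \<alpha>] content
    by (simp add: hilbert_integral_indicator content_def)
qed

theorem mainTheorem1:
  fixes X :: "'q::order set set"
  assumes "Sigma_Algebra.algebra UNIV X"
    and "abelian_subcat (VectX X :: ('q, 'f::field) pmod set)"
  shows "(\<forall>\<nu>. content (XUp X) \<nu> \<longrightarrow>
            additive_amplitude (VectX X :: ('q, 'f) pmod set) (hilbert_integral \<nu>))
       \<and> (\<forall>\<nu>1 \<nu>2. content (XUp X) \<nu>1 \<and> content (XUp X) \<nu>2 \<and>
            (\<forall>M \<in> (VectX X :: ('q, 'f) pmod set). hilbert_integral \<nu>1 M = hilbert_integral \<nu>2 M)
            \<longrightarrow> (\<forall>U \<in> XUp X. \<nu>1 U = \<nu>2 U))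
       \<and> (\<forall>\<alpha>. additive_amplitude (VectX X :: ('q, 'f) pmod set) \<alpha> \<longrightarrow>
            (\<exists>\<nu>. content (XUp X) \<nu> \<and>
                 (\<forall>M \<in> (VectX X :: ('q, 'f) pmod set). \<alpha> M = hilbert_integral \<nu> M)))"
proof (intro conjI allI impI ballI)
  fix \<nu> :: "'q set \<Rightarrow> ennreal" assume "content (XUp X) \<nu>"
  then show "additive_amplitude (VectX X :: ('q, 'f) pmod set) (hilbert_integral \<nu>)"
    by (rule additive_amplitude_hilbert_integral[OF assms(1)])
next
  fix \<nu>1 \<nu>2 :: "'q set \<Rightarrow> ennreal" and U
  assume "content (XUp X) \<nu>1 \<and> content (XUp X) \<nu>2 \<and>
    (\<forall>M \<in> (VectX X :: ('q, 'f) pmod set). hilbert_integral \<nu>1 M = hilbert_integral \<nu>2 M)"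
    and "U \<in> XUp X"
  then show "\<nu>1 U = \<nu>2 U"
    using content_eq_if_hilbert_integrals_eq[OF assms(1)] by blast
next
  fix \<alpha> :: "('q, 'f) pmod \<Rightarrow> ennreal" assume "additive_amplitude (VectX X) \<alpha>"
  then show "\<exists>\<nu>. content (XUp X) \<nu> \<and> (\<forall>M \<in> VectX X. \<alpha> M = hilbert_integral \<nu> M)"
    using content_amplitude_content[OF assms] additive_amplitude_eq_hilbert_integral[OF assms]
    by blast
qed

end
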